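(* For a semiring $(S,+,\cdot)$ the following are equivalent: (i) $S$ is a quasi completely regular semiring and $e+f=f+e$ for all $e,f\in E^+(S)$; (ii) $S$ is a b-lattice of quasi skew-rings and $e+f=f+e$ for all $e,f\in E^+(S)$; (iii) $S$ is additively quasi regular and $Reg^+S$ is a subsemigroup of $(S,+)$ which (as a semiring under the restricted operations) is a b-lattice of skew-rings.
   Context: A semiring $(S,+,\cdot)$ has two associative operations with $a(b+c)=ab+ac$, $(b+c)a=ba+ca$. $na$ is the $n$-fold sum of $a$. $E^+(S)$ is the set of additive idempotents; $Reg^+S$ is the set of additively regular elements ($a=a+x+a$ for some $x\in S$). $S$ is additively quasi regular if for each $a$ some $na$ is additively regular. $a$ is completely regular if there is $x$ with $a=a+x+a$, $a+x=x+a$, $a(a+x)=a+x$; $S$ is quasi completely regular if for each $a$ some $na$ is completely regular. A skew-ring is a semiring whose additive reduct is a (not necessarily commutative) group. A quasi skew-ring is a semiring $T$ containing a subsemiring $R$ which is a skew-ring such that for every $a\in T$ some $na\in R$. A b-lattice is a semiring with $(S,\cdot)$ a band and $(S,+)$ a semilattice; $S$ is a b-lattice of semirings of a class if there is a congruence $\rho$ on $S$ with $S/\rho$ a b-lattice and each $\rho$-class a subsemiring in that class. *)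

theory Defs
  imports Main
begin

text \<open>Semirings in the sense of the paper: a carrier S with two associative
  binary operations (no zero, no one, addition not necessarily commutative)
  satisfying both distributive laws.  Everything is relative to a carrier set,
  since subsemirings, congruence classes and quotients must be handled.\<close>

definition semiring :: "'a set \<Rightarrow> ('a \<Rightarrow> 'a \<Rightarrow> 'a) \<Rightarrow> ('a \<Rightarrow> 'a \<Rightarrow> 'a) \<Rightarrow> bool" where
  "semiring S add mul \<longleftrightarrow>
     (\<forall>a\<in>S. \<forall>b\<in>S. add a b \<in> S \<and> mul a b \<in> S) \<and>
     (\<forall>a\<in>S. \<forall>b\<in>S. \<forall>c\<in>S. add (add a b) c = add a (add b c)) \<and>
     (\<forall>a\<in>S. \<forall>b\<in>S. \<forall>c\<in>S. mul (mul a b) c = mul a (mul b c)) \<and>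
     (\<forall>a\<in>S. \<forall>b\<in>S. \<forall>c\<in>S. mul a (add b c) = add (mul a b) (mul a c)) \<and>
     (\<forall>a\<in>S. \<forall>b\<in>S. \<forall>c\<in>S. mul (add b c) a = add (mul b a) (mul c a))"

text \<open>n-fold sum n a (only used for n \<ge> 1).\<close>
fun nsum :: "('a \<Rightarrow> 'a \<Rightarrow> 'a) \<Rightarrow> nat \<Rightarrow> 'a \<Rightarrow> 'a" where
  "nsum add 0 a = a"
| "nsum add (Suc 0) a = a"
| "nsum add (Suc (Suc n)) a = add (nsum add (Suc n) a) a"

definition add_idem :: "'a set \<Rightarrow> ('a \<Rightarrow> 'a \<Rightarrow> 'a) \<Rightarrow> 'a set" where
  "add_idem S add = {e\<in>S. add e e = e}"

definition add_regular :: "'a set \<Rightarrow> ('a \<Rightarrow> 'a \<Rightarrow> 'a) \<Rightarrow> 'a \<Rightarrow> bool" where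
  "add_regular S add a \<longleftrightarrow> (\<exists>x\<in>S. a = add (add a x) a)"

definition Reg_add :: "'a set \<Rightarrow> ('a \<Rightarrow> 'a \<Rightarrow> 'a) \<Rightarrow> 'a set" where
  "Reg_add S add = {a\<in>S. add_regular S add a}"

definition add_quasi_regular :: "'a set \<Rightarrow> ('a \<Rightarrow> 'a \<Rightarrow> 'a) \<Rightarrow> bool" where
  "add_quasi_regular S add \<longleftrightarrow> (\<forall>a\<in>S. \<exists>n>0. add_regular S add (nsum add n a))"

definition completely_regular ::
  "'a set \<Rightarrow> ('a \<Rightarrow> 'a \<Rightarrow> 'a) \<Rightarrow> ('a \<Rightarrow> 'a \<Rightarrow> 'a) \<Rightarrow> 'a \<Rightarrow> bool" where
  "completely_regular S add mul a \<longleftrightarrow>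
     (\<exists>x\<in>S. a = add (add a x) a \<and> add a x = add x a \<and> mul a (add a x) = add a x)"

definition quasi_completely_regular ::
  "'a set \<Rightarrow> ('a \<Rightarrow> 'a \<Rightarrow> 'a) \<Rightarrow> ('a \<Rightarrow> 'a \<Rightarrow> 'a) \<Rightarrow> bool" where
  "quasi_completely_regular S add mul \<longleftrightarrow>
     semiring S add mul \<and> (\<forall>a\<in>S. \<exists>n>0. completely_regular S add mul (nsum add n a))"

definition skew_ring :: "'a set \<Rightarrow> ('a \<Rightarrow> 'a \<Rightarrow> 'a) \<Rightarrow> ('a \<Rightarrow> 'a \<Rightarrow> 'a) \<Rightarrow> bool" where
  "skew_ring S add mul \<longleftrightarrow> semiring S add mul \<and>
     (\<exists>z\<in>S. (\<forall>a\<in>S. add z a = a \<and> add a z = a \<and> (\<exists>b\<in>S. add a b = z \<and> add b a = z)))"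

definition subsemiring ::
  "'a set \<Rightarrow> 'a set \<Rightarrow> ('a \<Rightarrow> 'a \<Rightarrow> 'a) \<Rightarrow> ('a \<Rightarrow> 'a \<Rightarrow> 'a) \<Rightarrow> bool" where
  "subsemiring R S add mul \<longleftrightarrow> R \<subseteq> S \<and> (\<forall>a\<in>R. \<forall>b\<in>R. add a b \<in> R \<and> mul a b \<in> R)"

definition quasi_skew_ring :: "'a set \<Rightarrow> ('a \<Rightarrow> 'a \<Rightarrow> 'a) \<Rightarrow> ('a \<Rightarrow> 'a \<Rightarrow> 'a) \<Rightarrow> bool" where
  "quasi_skew_ring T add mul \<longleftrightarrow> semiring T add mul \<and>
     (\<exists>R. subsemiring R T add mul \<and> skew_ring R add mul \<and>
          (\<forall>a\<in>T. \<exists>n>0. nsum add n a \<in> R))"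

definition b_lattice :: "'a set \<Rightarrow> ('a \<Rightarrow> 'a \<Rightarrow> 'a) \<Rightarrow> ('a \<Rightarrow> 'a \<Rightarrow> 'a) \<Rightarrow> bool" where
  "b_lattice S add mul \<longleftrightarrow> semiring S add mul \<and>
     (\<forall>a\<in>S. mul a a = a) \<and> (\<forall>a\<in>S. add a a = a) \<and> (\<forall>a\<in>S. \<forall>b\<in>S. add a b = add b a)"

definition congruence :: "'a set \<Rightarrow> ('a \<Rightarrow> 'a \<Rightarrow> 'a) \<Rightarrow> ('a \<Rightarrow> 'a \<Rightarrow> 'a) \<Rightarrow> 'a rel \<Rightarrow> bool" where
  "congruence S add mul \<rho> \<longleftrightarrow> equiv S \<rho> \<and>
     (\<forall>a b c d. (a, b) \<in> \<rho> \<longrightarrow> (c, d) \<in> \<rho> \<longrightarrow>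
        (add a c, add b d) \<in> \<rho> \<and> (mul a c, mul b d) \<in> \<rho>)"

definition quot_op :: "'a rel \<Rightarrow> ('a \<Rightarrow> 'a \<Rightarrow> 'a) \<Rightarrow> 'a set \<Rightarrow> 'a set \<Rightarrow> 'a set" where
  "quot_op \<rho> f X Y = \<rho> `` {f (SOME x. x \<in> X) (SOME y. y \<in> Y)}"

definition b_lattice_of ::
  "('a set \<Rightarrow> ('a \<Rightarrow> 'a \<Rightarrow> 'a) \<Rightarrow> ('a \<Rightarrow> 'a \<Rightarrow> 'a) \<Rightarrow> bool) \<Rightarrow>
   'a set \<Rightarrow> ('a \<Rightarrow> 'a \<Rightarrow> 'a) \<Rightarrow> ('a \<Rightarrow> 'a \<Rightarrow> 'a) \<Rightarrow> bool" where
  "b_lattice_of P S add mul \<longleftrightarrow> semiring S add mul \<and>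
     (\<exists>\<rho>. congruence S add mul \<rho> \<and>
          b_lattice (S // \<rho>) (quot_op \<rho> add) (quot_op \<rho> mul) \<and>
          (\<forall>X\<in>S // \<rho>. subsemiring X S add mul \<and> P X add mul))"

end

theory Submission
  imports Defs
begin

text \<open>Every element a of a quasi completely regular semiring has a multiple n a
  lying in a maximal additive subgroup H_e, and e is determined by a. Since the
  additive idempotents commute and (by complete regularity) are multiplicatively
  idempotent, a \<mapsto> e is a homomorphism onto the b-lattice E^+(S). Its kernel is the
  required congruence: on S its classes are quasi skew-rings around H_e, and on
  Reg^+ S its classes are exactly the skew-rings H_e. Conversely, elements of
  skew-rings are completely regular, and two idempotents e, f commute because
  e + f and f + e lie in a common skew-ring class in which
  (e + f) + (f + e) + (e + f) = (e + f) + (e + f) forces both to be the zero.\<close>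

section \<open>Skew-rings and b-lattice quotients\<close>

lemma skew_ring_zeroI:
  assumes sk: "skew_ring X add mul" and uv: "u \<in> X" "v \<in> X"
    and absorb: "add u (add v u) = add u u"
  shows "\<forall>a\<in>X. add v a = a \<and> add a v = a"
proof -
  obtain z where z: "z \<in> X"
      "\<forall>a\<in>X. add z a = a \<and> add a z = a \<and> (\<exists>b\<in>X. add a b = z \<and> add b a = z)"
    using sk unfolding skew_ring_def by blast
  have assoc: "add (add a b) c = add a (add b c)" if "a \<in> X" "b \<in> X" "c \<in> X" for a b c
    using sk that unfolding skew_ring_def semiring_def by blast
  have cl: "add a b \<in> X" if "a \<in> X" "b \<in> X" for a b
    using sk that unfolding skew_ring_def semiring_def by blast
  obtain y where y: "y \<in> X" "add u y = z" "add y u = z"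
    using z uv by blast
  have "add v u = add (add y u) (add v u)"
    using z y uv cl by simp
  also have "\<dots> = add y (add u u)"
    using assoc[of y u "add v u"] cl y uv absorb by simp
  also have "\<dots> = u"
    using assoc[of y u u] y z uv by simp
  finally have vu: "add v u = u" .
  have "v = add v (add u y)"
    using z y uv by simp
  also have "\<dots> = z"
    using assoc[of v u y] vu y uv by simp
  finally show ?thesis
    using z by simp
qed

lemma skew_ring_completely_regular:
  assumes sk: "skew_ring X add mul" and "X \<subseteq> S" "p \<in> X"
  shows "completely_regular S add mul p"
proof -
  obtain z where z: "z \<in> X"
      "\<forall>a\<in>X. add z a = a \<and> add a z = a \<and> (\<exists>b\<in>X. add a b = z \<and> add b a = z)"
    using sk unfolding skew_ring_def by blast
  obtain b where b: "b \<in> X" "add p b = z" "add b p = z"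
    using z \<open>p \<in> X\<close> by blast
  have X: "semiring X add mul"
    using sk unfolding skew_ring_def by blast
  have "mul p (add z z) = add (mul p z) (mul p z)"
    using X z(1) \<open>p \<in> X\<close> unfolding semiring_def by blast
  moreover have "mul p z \<in> X"
    using X z(1) \<open>p \<in> X\<close> unfolding semiring_def by blast
  ultimately have pz: "mul p z \<in> X" "add (mul p z) (mul p z) = mul p z"
    using z by simp_all
  have "\<forall>a\<in>X. add (mul p z) a = a \<and> add a (mul p z) = a"
    by (rule skew_ring_zeroI[OF sk pz(1) pz(1)]) (simp only: pz(2))
  then have "add (mul p z) z = z"
    using z(1) by blast
  moreover have "add (mul p z) z = mul p z"
    using z pz(1) by blast
  ultimately have "mul p z = z"
    by simp
  show ?thesis
    unfolding completely_regular_def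
  proof (intro bexI[of _ b] conjI)
    show "p = add (add p b) p" "add p b = add b p" "mul p (add p b) = add p b"
      using b z \<open>p \<in> X\<close> \<open>mul p z = z\<close> by simp_all
    show "b \<in> S"
      using b \<open>X \<subseteq> S\<close> by blast
  qed
qed

lemma quot_op_class:
  assumes r: "equiv T r"
    and compat: "\<And>a b c d. (a, b) \<in> r \<Longrightarrow> (c, d) \<in> r \<Longrightarrow> (f a c, f b d) \<in> r"
    and "a \<in> T" "b \<in> T"
  shows "quot_op r f (r `` {a}) (r `` {b}) = r `` {f a b}"
proof -
  have rep: "(c, SOME x. x \<in> r `` {c}) \<in> r" if "c \<in> T" for c
  proof -
    have "c \<in> r `` {c}"
      using equiv_class_self[OF r that] .
    then have "(SOME x. x \<in> r `` {c}) \<in> r `` {c}"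
      by (rule someI)
    then show ?thesis by simp
  qed
  have "(f a b, f (SOME x. x \<in> r `` {a}) (SOME y. y \<in> r `` {b})) \<in> r"
    using compat rep assms(3,4) by blast
  then show ?thesis
    unfolding quot_op_def using equiv_class_eq[OF r] by simp
qed

lemma congruence_quot_add:
  "congruence T add mul r \<Longrightarrow> a \<in> T \<Longrightarrow> b \<in> T \<Longrightarrow>
    quot_op r add (r `` {a}) (r `` {b}) = r `` {add a b}"
  unfolding congruence_def by (rule quot_op_class) auto

lemma congruence_quot_mul:
  "congruence T add mul r \<Longrightarrow> a \<in> T \<Longrightarrow> b \<in> T \<Longrightarrow>
    quot_op r mul (r `` {a}) (r `` {b}) = r `` {mul a b}"
  unfolding congruence_def by (rule quot_op_class) auto

lemma b_lattice_quotientI: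
  assumes T: "semiring T add mul" and r: "congruence T add mul r"
    and add_idem: "\<And>a. a \<in> T \<Longrightarrow> (add a a, a) \<in> r"
    and mul_idem: "\<And>a. a \<in> T \<Longrightarrow> (mul a a, a) \<in> r"
    and add_comm: "\<And>a b. a \<in> T \<Longrightarrow> b \<in> T \<Longrightarrow> (add a b, add b a) \<in> r"
  shows "b_lattice (T // r) (quot_op r add) (quot_op r mul)"
proof -
  have eq: "equiv T r"
    using r unfolding congruence_def by blast
  have cls: "r `` {a} = r `` {b}" if "(a, b) \<in> r" for a b
    using equiv_class_eq[OF eq that] .
  have cl: "add a b \<in> T" "mul a b \<in> T" if "a \<in> T" "b \<in> T" for a b
    using T that unfolding semiring_def by blast+
  have laws:
    "add (add a b) c = add a (add b c)" "mul (mul a b) c = mul a (mul b c)"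
    "mul a (add b c) = add (mul a b) (mul a c)" "mul (add b c) a = add (mul b a) (mul c a)"
    if "a \<in> T" "b \<in> T" "c \<in> T" for a b c
    using T that unfolding semiring_def by blast+
  note quot = congruence_quot_add[OF r] congruence_quot_mul[OF r]
  show ?thesis
    unfolding b_lattice_def semiring_def
    by (intro conjI ballI; elim quotientE;
        simp add: quot cl laws quotientI cls add_idem mul_idem add_comm)
qed

lemma b_lattice_quotient_add_comm:
  assumes r: "congruence T add mul r" and "b_lattice (T // r) (quot_op r add) (quot_op r mul)"
    and "a \<in> T" "b \<in> T"
  shows "(add a b, add b a) \<in> r"
proof -
  have eq: "equiv T r"
    using r unfolding congruence_def by blast
  have "r `` {a} \<in> T // r" "r `` {b} \<in> T // r"
    using assms(3,4) by (auto intro: quotientI)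
  then have "quot_op r add (r `` {a}) (r `` {b}) = quot_op r add (r `` {b}) (r `` {a})"
    using assms(2) unfolding b_lattice_def by blast
  then have "r `` {add a b} = r `` {add b a}"
    using congruence_quot_add[OF r] assms(3,4) by simp
  moreover have "(a, a) \<in> r" "(b, b) \<in> r"
    using eq assms(3,4) unfolding equiv_def refl_on_def by blast+
  then have "add a b \<in> T" "add b a \<in> T"
    using r equiv_type[OF eq] unfolding congruence_def by blast+
  ultimately show ?thesis
    using eq_equiv_class_iff[OF eq] by blast
qed

lemma b_lattice_of_class:
  assumes "b_lattice_of P T add mul" "a \<in> T"
  obtains X where "a \<in> X" "X \<subseteq> T" "P X add mul"
proof -
  obtain r where r: "congruence T add mul r" "\<forall>X\<in>T // r. subsemiring X T add mul \<and> P X add mul"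
    using assms(1) unfolding b_lattice_of_def by blast
  have "equiv T r"
    using r(1) unfolding congruence_def by blast
  then have "a \<in> r `` {a}"
    using assms(2) by (rule equiv_class_self)
  moreover have "r `` {a} \<in> T // r"
    using assms(2) by (rule quotientI)
  then have "r `` {a} \<subseteq> T" "P (r `` {a}) add mul"
    using r(2) unfolding subsemiring_def by auto
  ultimately show thesis
    by (rule that)
qed

locale semiring_on =
  fixes S :: "'a set" and add :: "'a \<Rightarrow> 'a \<Rightarrow> 'a" (infixl "\<oplus>" 65)
    and mul :: "'a \<Rightarrow> 'a \<Rightarrow> 'a" (infixl "\<otimes>" 70)
  assumes semiring: "semiring S add mul"
begin

lemma add_closed [simp]: "a \<in> S \<Longrightarrow> b \<in> S \<Longrightarrow> a \<oplus> b \<in> S"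
  and mul_closed [simp]: "a \<in> S \<Longrightarrow> b \<in> S \<Longrightarrow> a \<otimes> b \<in> S"
  using semiring unfolding semiring_def by blast+

lemma add_assoc [simp]: "a \<in> S \<Longrightarrow> b \<in> S \<Longrightarrow> c \<in> S \<Longrightarrow> (a \<oplus> b) \<oplus> c = a \<oplus> (b \<oplus> c)"
  and mul_assoc [simp]: "a \<in> S \<Longrightarrow> b \<in> S \<Longrightarrow> c \<in> S \<Longrightarrow> (a \<otimes> b) \<otimes> c = a \<otimes> (b \<otimes> c)"
  and distrib_left: "a \<in> S \<Longrightarrow> b \<in> S \<Longrightarrow> c \<in> S \<Longrightarrow> a \<otimes> (b \<oplus> c) = a \<otimes> b \<oplus> a \<otimes> c"
  and distrib_right: "a \<in> S \<Longrightarrow> b \<in> S \<Longrightarrow> c \<in> S \<Longrightarrow> (b \<oplus> c) \<otimes> a = b \<otimes> a \<oplus> c \<otimes> a"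
  using semiring unfolding semiring_def by blast+

lemma subsemiring_semiring: "subsemiring T S add mul \<Longrightarrow> semiring T add mul"
  using semiring unfolding semiring_def subsemiring_def by (meson subsetD)

lemma nsum_Suc_eq: "nsum add (Suc n) a = (if n = 0 then a else nsum add n a \<oplus> a)"
  by (cases n) auto

lemma nsum_closed [simp]: "a \<in> S \<Longrightarrow> nsum add n a \<in> S"
  by (induction n) (auto simp: nsum_Suc_eq)

lemma nsum_add: "a \<in> S \<Longrightarrow> m > 0 \<Longrightarrow> k > 0 \<Longrightarrow> nsum add (m + k) a = nsum add m a \<oplus> nsum add k a"
  by (induction k) (auto simp: nsum_Suc_eq)

lemma nsum_nsum: "a \<in> S \<Longrightarrow> m > 0 \<Longrightarrow> n > 0 \<Longrightarrow> nsum add m (nsum add n a) = nsum add (m * n) a"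
  by (induction m) (auto simp: nsum_Suc_eq nsum_add[symmetric] add.commute)

lemma nsum_add_idem: "a \<oplus> a = a \<Longrightarrow> nsum add n a = a"
  by (induction n) (auto simp: nsum_Suc_eq)

lemma nsum_mul_right: "a \<in> S \<Longrightarrow> g \<in> S \<Longrightarrow> nsum add n a \<otimes> g = nsum add n (a \<otimes> g)"
  by (induction n) (auto simp: nsum_Suc_eq distrib_right)

lemma nsum_mul_left: "a \<in> S \<Longrightarrow> g \<in> S \<Longrightarrow> g \<otimes> nsum add n a = nsum add n (g \<otimes> a)"
  by (induction n) (auto simp: nsum_Suc_eq distrib_left)

section \<open>Maximal additive subgroups\<close>

text \<open>The group H_e of the paper: the maximal subgroup of (S, +) with identity e.\<close>

definition max_subgroup :: "'a \<Rightarrow> 'a set" where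
  "max_subgroup e = {p \<in> S. e \<in> S \<and> e \<oplus> e = e \<and> e \<oplus> p = p \<and> p \<oplus> e = p \<and>
     (\<exists>y\<in>S. p \<oplus> y = e \<and> y \<oplus> p = e \<and> e \<oplus> y = y \<and> y \<oplus> e = y)}"

lemma max_subgroupD:
  assumes "p \<in> max_subgroup e"
  shows "p \<in> S" "e \<in> S" "e \<oplus> e = e" "e \<oplus> p = p" "p \<oplus> e = p"
  using assms unfolding max_subgroup_def by auto

lemma max_subgroup_inverse:
  assumes "p \<in> max_subgroup e"
  obtains y where "y \<in> max_subgroup e" "p \<oplus> y = e" "y \<oplus> p = e"
proof -
  obtain y where y: "y \<in> S" "p \<oplus> y = e" "y \<oplus> p = e" "e \<oplus> y = y" "y \<oplus> e = y"
    using assms unfolding max_subgroup_def by blast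
  have "y \<in> max_subgroup e"
    unfolding max_subgroup_def using y max_subgroupD[OF assms] by blast
  with y that show thesis
    by blast
qed

lemma idem_in_max_subgroup: "e \<in> S \<Longrightarrow> e \<oplus> e = e \<Longrightarrow> e \<in> max_subgroup e"
  unfolding max_subgroup_def by blast

lemma max_subgroup_identity_unique:
  assumes "p \<in> max_subgroup e" "p \<in> max_subgroup f"
  shows "e = f"
proof -
  have absorb: "e \<oplus> f = e \<and> f \<oplus> e = e"
    if pe: "p \<in> max_subgroup e" and pf: "p \<in> max_subgroup f" for e f
  proof -
    obtain y where y: "y \<in> max_subgroup e" "p \<oplus> y = e" "y \<oplus> p = e"
      using pe by (rule max_subgroup_inverse)
    have S: "y \<in> S" "p \<in> S" "f \<in> S"
      using max_subgroupD[OF y(1)] max_subgroupD[OF pf] by auto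
    have fp: "f \<oplus> p = p" and pf': "p \<oplus> f = p"
      using max_subgroupD[OF pf] by auto
    have "e \<oplus> f = y \<oplus> (p \<oplus> f)"
      using S by (simp flip: y(3))
    then have "e \<oplus> f = e"
      by (simp only: pf' y(3))
    moreover have "f \<oplus> e = (f \<oplus> p) \<oplus> y"
      using S by (simp flip: y(2))
    then have "f \<oplus> e = e"
      by (simp only: fp y(2))
    ultimately show ?thesis
      by blast
  qed
  show ?thesis
    using absorb[OF assms] absorb[OF assms(2,1)] by simp
qed

lemma in_max_subgroupI:
  assumes p: "p \<in> S" and x: "x \<in> S" and reg: "p \<oplus> x \<oplus> p = p" and comm: "p \<oplus> x = x \<oplus> p"
  shows "p \<in> max_subgroup (p \<oplus> x)"
proof -
  define e where "e = p \<oplus> x"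
  have e: "e \<in> S" and px: "p \<oplus> x = e" and xp: "x \<oplus> p = e"
    using p x comm unfolding e_def by simp_all
  have ep: "e \<oplus> p = p"
    using reg by (simp add: px)
  have pe: "p \<oplus> e = p"
    using reg p x by (simp flip: xp)
  have "e \<oplus> e = (x \<oplus> p) \<oplus> e"
    by (simp only: xp)
  also have "\<dots> = x \<oplus> (p \<oplus> e)"
    using p x e by simp
  finally have ee: "e \<oplus> e = e"
    by (simp only: pe xp)
  define y where "y = e \<oplus> x \<oplus> e"
  have y: "y \<in> S"
    unfolding y_def using e x by simp
  have "p \<oplus> y = (p \<oplus> e) \<oplus> x \<oplus> e"
    unfolding y_def using p x e by simp
  then have py: "p \<oplus> y = e"
    by (simp only: pe px ee)
  have "y \<oplus> p = e \<oplus> (x \<oplus> (e \<oplus> p))"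
    unfolding y_def using p x e by simp
  then have yp: "y \<oplus> p = e"
    by (simp only: ep xp ee)
  have "e \<oplus> y = (e \<oplus> e) \<oplus> x \<oplus> e" "y \<oplus> e = e \<oplus> x \<oplus> (e \<oplus> e)"
    unfolding y_def using x e by simp_all
  then have ey: "e \<oplus> y = y" and ye: "y \<oplus> e = y"
    unfolding y_def by (simp_all only: ee)
  show ?thesis
    unfolding max_subgroup_def e_def[symmetric] using p e ee pe ep y py yp ey ye by blast
qed

lemma max_subgroup_add_closed:
  assumes p: "p \<in> max_subgroup e" and q: "q \<in> max_subgroup e"
  shows "p \<oplus> q \<in> max_subgroup e"
proof -
  obtain y where y: "y \<in> max_subgroup e" "p \<oplus> y = e" "y \<oplus> p = e"
    using p by (rule max_subgroup_inverse)
  obtain z where z: "z \<in> max_subgroup e" "q \<oplus> z = e" "z \<oplus> q = e"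
    using q by (rule max_subgroup_inverse)
  note D = max_subgroupD[OF p] max_subgroupD[OF q] max_subgroupD[OF y(1)] max_subgroupD[OF z(1)]
  have "(p \<oplus> q) \<oplus> (z \<oplus> y) = p \<oplus> ((q \<oplus> z) \<oplus> y)"
    using D by simp
  also have "\<dots> = e"
    using D by (simp only: z(2) y(2))
  finally have right_inv: "(p \<oplus> q) \<oplus> (z \<oplus> y) = e" .
  have "(z \<oplus> y) \<oplus> (p \<oplus> q) = z \<oplus> ((y \<oplus> p) \<oplus> q)"
    using D by simp
  also have "\<dots> = e"
    using D by (simp only: y(3) z(3))
  finally have left_inv: "(z \<oplus> y) \<oplus> (p \<oplus> q) = e" .
  have "e \<oplus> (p \<oplus> q) = p \<oplus> q" "e \<oplus> (z \<oplus> y) = z \<oplus> y"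
    using D by (simp_all flip: add_assoc)
  moreover have "(p \<oplus> q) \<oplus> e = p \<oplus> q" "(z \<oplus> y) \<oplus> e = z \<oplus> y"
    using D by simp_all
  ultimately show ?thesis
    using right_inv left_inv D unfolding max_subgroup_def by (blast intro: add_closed)
qed

lemma max_subgroup_nsum: "p \<in> max_subgroup e \<Longrightarrow> nsum add n p \<in> max_subgroup e"
  by (induction n) (auto simp: nsum_Suc_eq intro: max_subgroup_add_closed)

lemma max_subgroup_mul_add_idem_right:
  assumes p: "p \<in> max_subgroup e" and g: "g \<in> S" "g \<oplus> g = g"
  shows "p \<otimes> g = e \<otimes> g"
proof -
  obtain y where y: "y \<in> max_subgroup e" "p \<oplus> y = e" "y \<oplus> p = e"
    using p by (rule max_subgroup_inverse)
  note D = max_subgroupD[OF p] max_subgroupD[OF y(1)]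
  have pg: "p \<otimes> g \<oplus> p \<otimes> g = p \<otimes> g"
    using distrib_left[of p g g] D g by simp
  have yg: "p \<otimes> g \<oplus> y \<otimes> g = e \<otimes> g"
    using distrib_right[of g p y] D g y(2) by simp
  have eg: "p \<otimes> g \<oplus> e \<otimes> g = p \<otimes> g"
    using distrib_right[of g p e] D g by simp
  have "e \<otimes> g = (p \<otimes> g \<oplus> p \<otimes> g) \<oplus> y \<otimes> g"
    by (simp only: pg yg)
  also have "\<dots> = p \<otimes> g \<oplus> e \<otimes> g"
    using D g by (simp add: yg)
  finally show ?thesis
    by (simp only: eg)
qed

lemma max_subgroup_mul_add_idem_left:
  assumes p: "p \<in> max_subgroup e" and g: "g \<in> S" "g \<oplus> g = g"
  shows "g \<otimes> p = g \<otimes> e"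
proof -
  obtain y where y: "y \<in> max_subgroup e" "p \<oplus> y = e" "y \<oplus> p = e"
    using p by (rule max_subgroup_inverse)
  note D = max_subgroupD[OF p] max_subgroupD[OF y(1)]
  have gp: "g \<otimes> p \<oplus> g \<otimes> p = g \<otimes> p"
    using distrib_right[of p g g] D g by simp
  have gy: "g \<otimes> p \<oplus> g \<otimes> y = g \<otimes> e"
    using distrib_left[of g p y] D g y(2) by simp
  have ge: "g \<otimes> p \<oplus> g \<otimes> e = g \<otimes> p"
    using distrib_left[of g p e] D g by simp
  have "g \<otimes> e = (g \<otimes> p \<oplus> g \<otimes> p) \<oplus> g \<otimes> y"
    by (simp only: gp gy)
  also have "\<dots> = g \<otimes> p \<oplus> g \<otimes> e"
    using D g by (simp add: gy)
  finally show ?thesis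
    by (simp only: ge)
qed

lemma max_subgroup_mul:
  assumes p: "p \<in> max_subgroup e" and q: "q \<in> max_subgroup f"
  shows "p \<otimes> q \<in> max_subgroup (e \<otimes> f)"
proof -
  obtain z where z: "z \<in> max_subgroup f" "q \<oplus> z = f" "z \<oplus> q = f"
    using q by (rule max_subgroup_inverse)
  have S: "p \<in> S" "q \<in> S" "z \<in> S" "f \<in> S"
    and f: "f \<oplus> f = f" "f \<oplus> q = q" "q \<oplus> f = q" "f \<oplus> z = z" "z \<oplus> f = z"
    using max_subgroupD[OF p] max_subgroupD[OF q] max_subgroupD[OF z(1)] by auto
  have ef: "e \<otimes> f = p \<otimes> f"
    using max_subgroup_mul_add_idem_right[OF p S(4) f(1)] by simp
  have left: "p \<otimes> a \<oplus> p \<otimes> b = p \<otimes> (a \<oplus> b)" if "a \<in> S" "b \<in> S" for a b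
    using distrib_left[OF S(1) that] by simp
  have "p \<otimes> q \<oplus> p \<otimes> z = e \<otimes> f" "p \<otimes> z \<oplus> p \<otimes> q = e \<otimes> f"
    "e \<otimes> f \<oplus> p \<otimes> q = p \<otimes> q" "p \<otimes> q \<oplus> e \<otimes> f = p \<otimes> q"
    "e \<otimes> f \<oplus> p \<otimes> z = p \<otimes> z" "p \<otimes> z \<oplus> e \<otimes> f = p \<otimes> z"
    "e \<otimes> f \<oplus> e \<otimes> f = e \<otimes> f"
    by (simp_all only: ef left S f z(2,3))
  moreover have "p \<otimes> q \<in> S" "p \<otimes> z \<in> S" "e \<otimes> f \<in> S"
    using S max_subgroupD[OF p] by simp_all
  ultimately show ?thesis
    unfolding max_subgroup_def by blast
qed

lemma max_subgroup_skew_ring: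
  assumes e: "e \<in> S" "e \<oplus> e = e" "e \<otimes> e = e"
  shows "skew_ring (max_subgroup e) add mul"
proof -
  have "subsemiring (max_subgroup e) S add mul"
    unfolding subsemiring_def using max_subgroup_add_closed max_subgroup_mul[of _ e _ e]
    by (auto simp: e(3) dest: max_subgroupD)
  then have "semiring (max_subgroup e) add mul"
    by (rule subsemiring_semiring)
  moreover have "e \<in> max_subgroup e"
    using e(1,2) by (rule idem_in_max_subgroup)
  moreover have "e \<oplus> p = p \<and> p \<oplus> e = p \<and> (\<exists>y\<in>max_subgroup e. p \<oplus> y = e \<and> y \<oplus> p = e)"
    if p: "p \<in> max_subgroup e" for p
  proof -
    obtain y where "y \<in> max_subgroup e" "p \<oplus> y = e" "y \<oplus> p = e"
      using p by (rule max_subgroup_inverse)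
    then show ?thesis
      using max_subgroupD[OF p] by blast
  qed
  ultimately show ?thesis
    unfolding skew_ring_def by blast
qed

lemma completely_regular_add_idem_mul_idem:
  assumes e: "e \<in> S" "e \<oplus> e = e" and "completely_regular S add mul e"
  shows "e \<otimes> e = e"
proof -
  obtain x where x: "x \<in> S" "e = e \<oplus> x \<oplus> e" "e \<oplus> x = x \<oplus> e" "e \<otimes> (e \<oplus> x) = e \<oplus> x"
    using assms(3) unfolding completely_regular_def by blast
  have "e \<in> max_subgroup (e \<oplus> x)"
    using in_max_subgroupI[OF e(1) x(1) x(2)[symmetric] x(3)] .
  then have "e \<oplus> x = e"
    using max_subgroup_identity_unique idem_in_max_subgroup[OF e] by blast
  then show ?thesis
    using x(4) by simp
qed

lemma max_subgroup_subset_Reg: "max_subgroup e \<subseteq> Reg_add S add"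
proof
  fix p
  assume p: "p \<in> max_subgroup e"
  then obtain y where y: "y \<in> max_subgroup e" "p \<oplus> y = e"
    by (rule max_subgroup_inverse)
  then have "p = p \<oplus> y \<oplus> p"
    using max_subgroupD[OF p] by (simp only:)
  then show "p \<in> Reg_add S add"
    unfolding Reg_add_def add_regular_def using max_subgroupD[OF p] max_subgroupD[OF y(1)] by blast
qed

lemma Reg_mul_right:
  assumes a: "a \<in> Reg_add S add" and b: "b \<in> S"
  shows "a \<otimes> b \<in> Reg_add S add"
proof -
  obtain x where x: "x \<in> S" "a = a \<oplus> x \<oplus> a" and "a \<in> S"
    using a unfolding Reg_add_def add_regular_def by blast
  have "a \<otimes> b \<oplus> x \<otimes> b \<oplus> a \<otimes> b = (a \<oplus> x \<oplus> a) \<otimes> b"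
    using x(1) \<open>a \<in> S\<close> b by (simp add: distrib_right)
  then have "a \<otimes> b = a \<otimes> b \<oplus> x \<otimes> b \<oplus> a \<otimes> b"
    by (simp only: x(2)[symmetric])
  then show ?thesis
    unfolding Reg_add_def add_regular_def using x(1) \<open>a \<in> S\<close> b by (blast intro: mul_closed)
qed

lemma add_idem_mul_right:
  "e \<in> S \<Longrightarrow> f \<in> S \<Longrightarrow> f \<oplus> f = f \<Longrightarrow> e \<otimes> f \<oplus> e \<otimes> f = e \<otimes> f"
  using distrib_left[of e f f] by simp

lemma add_idem_add_closed:
  assumes e: "e \<in> S" "e \<oplus> e = e" and f: "f \<in> S" "f \<oplus> f = f" and comm: "f \<oplus> e = e \<oplus> f"
  shows "e \<oplus> f \<oplus> (e \<oplus> f) = e \<oplus> f"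
proof -
  have "e \<oplus> f \<oplus> (e \<oplus> f) = e \<oplus> (f \<oplus> e \<oplus> f)"
    using e(1) f(1) by simp
  also have "\<dots> = e \<oplus> (e \<oplus> f \<oplus> f)"
    by (simp only: comm)
  also have "\<dots> = (e \<oplus> e) \<oplus> (f \<oplus> f)"
    using e(1) f(1) by simp
  finally show ?thesis
    by (simp only: e(2) f(2))
qed

lemma add_idem_sandwich:
  assumes e: "e \<in> S" "e \<oplus> e = e" and f: "f \<in> S" "f \<oplus> f = f"
  shows "(e \<oplus> f) \<oplus> ((f \<oplus> e) \<oplus> (e \<oplus> f)) = (e \<oplus> f) \<oplus> (e \<oplus> f)"
proof -
  have absorb: "a \<oplus> (a \<oplus> w) = a \<oplus> w" if "a \<in> S" "a \<oplus> a = a" "w \<in> S" for a w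
    using that by (simp flip: add_assoc)
  show ?thesis
    using e f by (simp add: absorb)
qed

lemma quasi_completely_regular_if_b_lattice_of_quasi_skew_rings:
  assumes "b_lattice_of quasi_skew_ring S add mul"
  shows "quasi_completely_regular S add mul"
  unfolding quasi_completely_regular_def
proof (intro conjI semiring ballI)
  fix a
  assume "a \<in> S"
  with assms obtain X where X: "a \<in> X" "X \<subseteq> S" "quasi_skew_ring X add mul"
    by (rule b_lattice_of_class)
  then obtain R n where R: "R \<subseteq> X" "skew_ring R add mul" "n > 0" "nsum add n a \<in> R"
    unfolding quasi_skew_ring_def subsemiring_def by blast
  have "completely_regular S add mul (nsum add n a)"
    using skew_ring_completely_regular[OF R(2) _ R(4)] R(1) X(2) by blast
  with R(3) show "\<exists>n>0. completely_regular S add mul (nsum add n a)"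
    by blast
qed

lemma quasi_completely_regular_if_Reg_b_lattice_of_skew_rings:
  assumes "add_quasi_regular S add" "b_lattice_of skew_ring (Reg_add S add) add mul"
  shows "quasi_completely_regular S add mul"
  unfolding quasi_completely_regular_def
proof (intro conjI semiring ballI)
  fix a
  assume "a \<in> S"
  then obtain n where n: "n > 0" "nsum add n a \<in> Reg_add S add"
    using assms(1) unfolding add_quasi_regular_def Reg_add_def by auto
  obtain X where "nsum add n a \<in> X" "X \<subseteq> Reg_add S add" "skew_ring X add mul"
    using assms(2) n(2) by (rule b_lattice_of_class)
  then have "completely_regular S add mul (nsum add n a)"
    using skew_ring_completely_regular[of X add mul S] unfolding Reg_add_def by blast
  with n show "\<exists>n>0. completely_regular S add mul (nsum add n a)"
    by blast
qed

lemma add_idem_commute_if_Reg_b_lattice_of_skew_rings: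
  assumes Reg_closed: "\<forall>a\<in>Reg_add S add. \<forall>b\<in>Reg_add S add. a \<oplus> b \<in> Reg_add S add"
    and bl: "b_lattice_of skew_ring (Reg_add S add) add mul"
    and "e \<in> add_idem S add" "f \<in> add_idem S add"
  shows "e \<oplus> f = f \<oplus> e"
proof -
  have e: "e \<in> S" "e \<oplus> e = e" and f: "f \<in> S" "f \<oplus> f = f"
    using assms(3,4) unfolding add_idem_def by auto
  have Reg: "e \<in> Reg_add S add" "f \<in> Reg_add S add"
    using idem_in_max_subgroup max_subgroup_subset_Reg e f by blast+
  then have uv: "e \<oplus> f \<in> Reg_add S add" "f \<oplus> e \<in> Reg_add S add"
    using Reg_closed by blast+
  obtain r where r: "congruence (Reg_add S add) add mul r"
      "b_lattice (Reg_add S add // r) (quot_op r add) (quot_op r mul)"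
      "\<forall>X\<in>Reg_add S add // r. subsemiring X (Reg_add S add) add mul \<and> skew_ring X add mul"
    using bl unfolding b_lattice_of_def by blast
  have eq: "equiv (Reg_add S add) r"
    using r(1) unfolding congruence_def by blast
  define X where "X = r `` {e \<oplus> f}"
  have "X \<in> Reg_add S add // r"
    unfolding X_def using uv(1) by (rule quotientI)
  then have X: "skew_ring X add mul"
    using r(3) by blast
  have "(e \<oplus> f, f \<oplus> e) \<in> r"
    using b_lattice_quotient_add_comm[OF r(1,2) Reg] .
  then have uX: "e \<oplus> f \<in> X" and vX: "f \<oplus> e \<in> X"
    unfolding X_def using equiv_class_self[OF eq uv(1)] by auto
  have "\<forall>a\<in>X. (f \<oplus> e) \<oplus> a = a \<and> a \<oplus> (f \<oplus> e) = a"
    using skew_ring_zeroI[OF X uX vX add_idem_sandwich[OF e f]] .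
  then have "e \<oplus> f = (e \<oplus> f) \<oplus> (f \<oplus> e)"
    using uX by simp
  moreover have "\<forall>a\<in>X. (e \<oplus> f) \<oplus> a = a \<and> a \<oplus> (e \<oplus> f) = a"
    using skew_ring_zeroI[OF X vX uX add_idem_sandwich[OF f e]] .
  then have "(e \<oplus> f) \<oplus> (f \<oplus> e) = f \<oplus> e"
    using vX by simp
  ultimately show ?thesis
    by simp
qed

end

section \<open>The idempotent attached to an element\<close>

locale quasi_completely_regular_semiring = semiring_on +
  assumes nsum_completely_regular: "\<forall>a\<in>S. \<exists>n>0. completely_regular S add mul (nsum add n a)"
begin

lemma add_idem_mul_idem:
  assumes "e \<in> S" "e \<oplus> e = e"
  shows "e \<otimes> e = e"
proof -
  obtain n where "completely_regular S add mul (nsum add n e)"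
    using nsum_completely_regular assms(1) by blast
  then show ?thesis
    using completely_regular_add_idem_mul_idem[OF assms] nsum_add_idem[OF assms(2)] by simp
qed

lemma ex_nsum_in_max_subgroup:
  assumes "a \<in> S"
  shows "\<exists>e. \<exists>n>0. nsum add n a \<in> max_subgroup e"
proof -
  obtain n x where "n > 0" "x \<in> S" "nsum add n a = nsum add n a \<oplus> x \<oplus> nsum add n a"
      "nsum add n a \<oplus> x = x \<oplus> nsum add n a"
    using nsum_completely_regular assms unfolding completely_regular_def by blast
  then show ?thesis
    using in_max_subgroupI[OF nsum_closed[OF assms]] by metis
qed

text \<open>The e with n a \<in> H_e for some n > 0; it is unique by idem_of_eqI.\<close>

definition idem_of :: "'a \<Rightarrow> 'a" where
  "idem_of a = (SOME e. \<exists>n>0. nsum add n a \<in> max_subgroup e)"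

lemma nsum_in_max_subgroup_idem_of:
  "a \<in> S \<Longrightarrow> \<exists>n>0. nsum add n a \<in> max_subgroup (idem_of a)"
  unfolding idem_of_def by (rule someI_ex) (rule ex_nsum_in_max_subgroup)

lemma idem_of_eqI:
  assumes a: "a \<in> S" and n: "n > 0" "nsum add n a \<in> max_subgroup e"
  shows "idem_of a = e"
proof -
  obtain m where m: "m > 0" "nsum add m a \<in> max_subgroup (idem_of a)"
    using nsum_in_max_subgroup_idem_of[OF a] by blast
  have "nsum add (m * n) a \<in> max_subgroup e"
    using max_subgroup_nsum[OF n(2), of m] nsum_nsum[OF a m(1) n(1)] by simp
  moreover have "nsum add (m * n) a \<in> max_subgroup (idem_of a)"
    using max_subgroup_nsum[OF m(2), of n] nsum_nsum[OF a n(1) m(1)] by (simp add: mult.commute)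
  ultimately show ?thesis
    by (rule max_subgroup_identity_unique[rotated])
qed

lemma idem_of_max_subgroup: "p \<in> max_subgroup e \<Longrightarrow> idem_of p = e"
  using idem_of_eqI[of p 1 e] max_subgroupD by simp

lemma idem_of_add_idem:
  assumes "a \<in> S"
  shows "idem_of a \<in> S" "idem_of a \<oplus> idem_of a = idem_of a"
  using nsum_in_max_subgroup_idem_of[OF assms] max_subgroupD by blast+

lemma mul_add_idem_right_idem_of:
  assumes a: "a \<in> S" and g: "g \<in> S" "g \<oplus> g = g"
  shows "a \<otimes> g = idem_of a \<otimes> g"
proof -
  obtain n where n: "nsum add n a \<in> max_subgroup (idem_of a)"
    using nsum_in_max_subgroup_idem_of[OF a] by blast
  have "a \<otimes> g \<oplus> a \<otimes> g = a \<otimes> g"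
    using distrib_left[OF a g(1) g(1)] g(2) by simp
  then have "a \<otimes> g = nsum add n (a \<otimes> g)"
    by (simp add: nsum_add_idem)
  also have "\<dots> = nsum add n a \<otimes> g"
    using nsum_mul_right[OF a g(1)] by simp
  also have "\<dots> = idem_of a \<otimes> g"
    using max_subgroup_mul_add_idem_right[OF n g] .
  finally show ?thesis .
qed

lemma mul_add_idem_left_idem_of:
  assumes a: "a \<in> S" and g: "g \<in> S" "g \<oplus> g = g"
  shows "g \<otimes> a = g \<otimes> idem_of a"
proof -
  obtain n where n: "nsum add n a \<in> max_subgroup (idem_of a)"
    using nsum_in_max_subgroup_idem_of[OF a] by blast
  have "g \<otimes> a \<oplus> g \<otimes> a = g \<otimes> a"
    using distrib_right[OF a g(1) g(1)] g(2) by simp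
  then have "g \<otimes> a = nsum add n (g \<otimes> a)"
    by (simp add: nsum_add_idem)
  also have "\<dots> = g \<otimes> nsum add n a"
    using nsum_mul_left[OF a g(1)] by simp
  also have "\<dots> = g \<otimes> idem_of a"
    using max_subgroup_mul_add_idem_left[OF n g] .
  finally show ?thesis .
qed

lemma add_idem_eqI:
  assumes h: "h \<in> S" "h \<oplus> h = h" and k: "k \<in> S" "k \<oplus> k = k"
    and right: "\<And>g. g \<in> S \<Longrightarrow> g \<oplus> g = g \<Longrightarrow> h \<otimes> g = k \<otimes> g"
    and left: "\<And>g. g \<in> S \<Longrightarrow> g \<oplus> g = g \<Longrightarrow> g \<otimes> h = g \<otimes> k"
  shows "h = k"
proof -
  have "h = h \<otimes> h"
    using add_idem_mul_idem[OF h] by simp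
  also have "\<dots> = k \<otimes> h"
    using right[OF h] .
  also have "\<dots> = k \<otimes> k"
    using left[OF k] .
  also have "\<dots> = k"
    using add_idem_mul_idem[OF k] .
  finally show ?thesis .
qed

lemma idem_of_mul:
  assumes a: "a \<in> S" and b: "b \<in> S"
  shows "idem_of (a \<otimes> b) = idem_of a \<otimes> idem_of b"
proof (rule add_idem_eqI)
  note ea = idem_of_add_idem[OF a] and eb = idem_of_add_idem[OF b]
  show "idem_of (a \<otimes> b) \<in> S" "idem_of (a \<otimes> b) \<oplus> idem_of (a \<otimes> b) = idem_of (a \<otimes> b)"
    using idem_of_add_idem a b by simp_all
  show "idem_of a \<otimes> idem_of b \<in> S"
    "idem_of a \<otimes> idem_of b \<oplus> idem_of a \<otimes> idem_of b = idem_of a \<otimes> idem_of b"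
    using ea eb add_idem_mul_right by simp_all
  fix g
  assume g: "g \<in> S" "g \<oplus> g = g"
  have bg: "idem_of b \<otimes> g \<in> S" "idem_of b \<otimes> g \<oplus> idem_of b \<otimes> g = idem_of b \<otimes> g"
    using eb g add_idem_mul_right by simp_all
  have "idem_of (a \<otimes> b) \<otimes> g = a \<otimes> (b \<otimes> g)"
    using mul_add_idem_right_idem_of[of "a \<otimes> b" g] a b g by simp
  also have "\<dots> = a \<otimes> (idem_of b \<otimes> g)"
    using mul_add_idem_right_idem_of[OF b g] by simp
  also have "\<dots> = idem_of a \<otimes> idem_of b \<otimes> g"
    using mul_add_idem_right_idem_of[OF a bg] ea eb g by simp
  finally show "idem_of (a \<otimes> b) \<otimes> g = idem_of a \<otimes> idem_of b \<otimes> g" .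
  have ga: "g \<otimes> idem_of a \<in> S" "g \<otimes> idem_of a \<oplus> g \<otimes> idem_of a = g \<otimes> idem_of a"
    using ea g add_idem_mul_right by simp_all
  have "g \<otimes> idem_of (a \<otimes> b) = g \<otimes> a \<otimes> b"
    using mul_add_idem_left_idem_of[of "a \<otimes> b" g] a b g by simp
  also have "\<dots> = g \<otimes> idem_of a \<otimes> b"
    using mul_add_idem_left_idem_of[OF a g] by simp
  also have "\<dots> = g \<otimes> (idem_of a \<otimes> idem_of b)"
    using mul_add_idem_left_idem_of[OF b ga] ea eb g by simp
  finally show "g \<otimes> idem_of (a \<otimes> b) = g \<otimes> (idem_of a \<otimes> idem_of b)" .
qed

end

locale qcr_semiring_commuting_idem = quasi_completely_regular_semiring +
  assumes add_idem_comm: "\<forall>e\<in>add_idem S add. \<forall>f\<in>add_idem S add. e \<oplus> f = f \<oplus> e"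
begin

lemma add_idem_commute: "e \<in> S \<Longrightarrow> e \<oplus> e = e \<Longrightarrow> f \<in> S \<Longrightarrow> f \<oplus> f = f \<Longrightarrow> e \<oplus> f = f \<oplus> e"
  using add_idem_comm unfolding add_idem_def by blast

lemma idem_of_add:
  assumes a: "a \<in> S" and b: "b \<in> S"
  shows "idem_of (a \<oplus> b) = idem_of a \<oplus> idem_of b"
proof (rule add_idem_eqI)
  note ea = idem_of_add_idem[OF a] and eb = idem_of_add_idem[OF b]
  show "idem_of (a \<oplus> b) \<in> S" "idem_of (a \<oplus> b) \<oplus> idem_of (a \<oplus> b) = idem_of (a \<oplus> b)"
    using idem_of_add_idem a b by simp_all
  show "idem_of a \<oplus> idem_of b \<in> S"
    "idem_of a \<oplus> idem_of b \<oplus> (idem_of a \<oplus> idem_of b) = idem_of a \<oplus> idem_of b"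
    using ea eb add_idem_add_closed add_idem_commute by simp_all
  fix g
  assume g: "g \<in> S" "g \<oplus> g = g"
  have "idem_of (a \<oplus> b) \<otimes> g = a \<otimes> g \<oplus> b \<otimes> g"
    using mul_add_idem_right_idem_of[of "a \<oplus> b" g] a b g by (simp add: distrib_right)
  also have "\<dots> = (idem_of a \<oplus> idem_of b) \<otimes> g"
    using mul_add_idem_right_idem_of[OF a g] mul_add_idem_right_idem_of[OF b g] ea eb g
    by (simp add: distrib_right)
  finally show "idem_of (a \<oplus> b) \<otimes> g = (idem_of a \<oplus> idem_of b) \<otimes> g" .
  have "g \<otimes> idem_of (a \<oplus> b) = g \<otimes> a \<oplus> g \<otimes> b"
    using mul_add_idem_left_idem_of[of "a \<oplus> b" g] a b g by (simp add: distrib_left)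
  also have "\<dots> = g \<otimes> (idem_of a \<oplus> idem_of b)"
    using mul_add_idem_left_idem_of[OF a g] mul_add_idem_left_idem_of[OF b g] ea eb g
    by (simp add: distrib_left)
  finally show "g \<otimes> idem_of (a \<oplus> b) = g \<otimes> (idem_of a \<oplus> idem_of b)" .
qed

lemma idem_of_idem: "e \<in> S \<Longrightarrow> e \<oplus> e = e \<Longrightarrow> idem_of e = e"
  by (rule idem_of_max_subgroup) (rule idem_in_max_subgroup)

lemma Reg_in_max_subgroup:
  assumes "a \<in> Reg_add S add"
  shows "a \<in> max_subgroup (idem_of a)"
proof -
  obtain x where x: "x \<in> S" "a = a \<oplus> x \<oplus> a" and a: "a \<in> S"
    using assms unfolding Reg_add_def add_regular_def by blast
  have "(a \<oplus> x \<oplus> a) \<oplus> x = a \<oplus> x \<oplus> (a \<oplus> x)" "x \<oplus> (a \<oplus> x \<oplus> a) = x \<oplus> a \<oplus> (x \<oplus> a)"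
    using a x(1) by simp_all
  then have ax: "a \<oplus> x \<oplus> (a \<oplus> x) = a \<oplus> x" and xa: "x \<oplus> a \<oplus> (x \<oplus> a) = x \<oplus> a"
    by (simp_all only: x(2)[symmetric])
  have "a \<oplus> x = idem_of a \<oplus> idem_of x"
    using idem_of_idem[OF _ ax] idem_of_add[OF a x(1)] a x(1) by simp
  also have "\<dots> = idem_of x \<oplus> idem_of a"
    using add_idem_commute idem_of_add_idem a x(1) by simp
  also have "\<dots> = x \<oplus> a"
    using idem_of_idem[OF _ xa] idem_of_add[OF x(1) a] a x(1) by simp
  finally have "a \<in> max_subgroup (a \<oplus> x)"
    by (rule in_max_subgroupI[OF a x(1) x(2)[symmetric]])
  then show ?thesis
    using idem_of_max_subgroup by simp
qed

lemma Reg_add_closed: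
  assumes "a \<in> Reg_add S add" "b \<in> Reg_add S add"
  shows "a \<oplus> b \<in> Reg_add S add"
proof -
  define e f where "e = idem_of a" and "f = idem_of b"
  have a: "a \<in> max_subgroup e" and b: "b \<in> max_subgroup f"
    using Reg_in_max_subgroup assms unfolding e_def f_def by blast+
  obtain y where y: "y \<in> max_subgroup e" "y \<oplus> a = e"
    using a by (rule max_subgroup_inverse)
  obtain z where z: "z \<in> max_subgroup f" "b \<oplus> z = f"
    using b by (rule max_subgroup_inverse)
  have S: "a \<in> S" "b \<in> S" "y \<in> S" "z \<in> S" "e \<in> S" "f \<in> S"
    using a b y(1) z(1) by (auto dest: max_subgroupD)
  have ae: "a \<oplus> e = a" and fb: "f \<oplus> b = b"
    using a b by (auto dest: max_subgroupD)
  have fe: "f \<oplus> e = e \<oplus> f"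
    using add_idem_commute a b by (auto dest: max_subgroupD)
  have "(a \<oplus> b) \<oplus> (z \<oplus> y) \<oplus> (a \<oplus> b) = a \<oplus> ((b \<oplus> z) \<oplus> ((y \<oplus> a) \<oplus> b))"
    using S by simp
  also have "\<dots> = a \<oplus> (f \<oplus> e) \<oplus> b"
    using S by (simp add: y(2) z(2))
  also have "\<dots> = (a \<oplus> e) \<oplus> (f \<oplus> b)"
    using S by (simp add: fe)
  finally have "a \<oplus> b = (a \<oplus> b) \<oplus> (z \<oplus> y) \<oplus> (a \<oplus> b)"
    by (simp only: ae fb)
  then show ?thesis
    unfolding Reg_add_def add_regular_def using S by (blast intro: add_closed)
qed

lemma Reg_class_eq_max_subgroup:
  assumes "e \<in> S" "e \<oplus> e = e"
  shows "{b \<in> Reg_add S add. idem_of b = e} = max_subgroup e"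
  using Reg_in_max_subgroup max_subgroup_subset_Reg idem_of_max_subgroup by blast

lemma idem_of_class_subsemiring:
  assumes T: "subsemiring T S add mul" and e: "e \<in> S" "e \<oplus> e = e"
  shows "subsemiring {b \<in> T. idem_of b = e} T add mul"
proof -
  have "a \<in> S" if "a \<in> T" for a
    using T that unfolding subsemiring_def by blast
  then show ?thesis
    using T e unfolding subsemiring_def
    by (auto simp: idem_of_add idem_of_mul add_idem_mul_idem)
qed

lemma b_lattice_of_idem_of_classes:
  assumes T: "subsemiring T S add mul"
    and P: "\<And>e. e \<in> S \<Longrightarrow> e \<oplus> e = e \<Longrightarrow> P {b \<in> T. idem_of b = e} add mul"
  shows "b_lattice_of P T add mul"
proof -
  define r where "r = {(a, b). a \<in> T \<and> b \<in> T \<and> idem_of a = idem_of b}"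
  have TS: "a \<in> S" if "a \<in> T" for a
    using T that unfolding subsemiring_def by blast
  have "equiv T r"
    unfolding r_def equiv_def refl_on_def sym_def trans_def by auto
  then have r: "congruence T add mul r"
    unfolding congruence_def r_def using T TS idem_of_add idem_of_mul
    by (auto simp: subsemiring_def subset_iff)
  have "b_lattice (T // r) (quot_op r add) (quot_op r mul)"
  proof (rule b_lattice_quotientI[OF subsemiring_semiring[OF T] r])
    fix a b
    assume "a \<in> T" "b \<in> T"
    then show "(a \<oplus> a, a) \<in> r" "(a \<otimes> a, a) \<in> r" "(a \<oplus> b, b \<oplus> a) \<in> r"
      using T TS unfolding r_def subsemiring_def
      by (auto simp: idem_of_add idem_of_mul idem_of_add_idem add_idem_mul_idem add_idem_commute)
  qed
  moreover have "subsemiring X T add mul \<and> P X add mul" if X: "X \<in> T // r" for X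
  proof -
    obtain a where a: "a \<in> T" "X = r `` {a}"
      using X by (rule quotientE)
    then have "X = {b \<in> T. idem_of b = idem_of a}"
      unfolding r_def by auto
    then show ?thesis
      using idem_of_class_subsemiring[OF T] P idem_of_add_idem TS a(1) by auto
  qed
  ultimately show ?thesis
    unfolding b_lattice_of_def using subsemiring_semiring[OF T] r by blast
qed

lemma idem_of_class_quasi_skew_ring:
  assumes e: "e \<in> S" "e \<oplus> e = e"
  shows "quasi_skew_ring {b \<in> S. idem_of b = e} add mul"
  unfolding quasi_skew_ring_def
proof (intro conjI exI)
  have "subsemiring S S add mul"
    unfolding subsemiring_def by simp
  then show "semiring {b \<in> S. idem_of b = e} add mul"
    using idem_of_class_subsemiring[OF _ e] subsemiring_semiring by blast
  have "skew_ring (max_subgroup e) add mul"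
    using max_subgroup_skew_ring[OF e add_idem_mul_idem[OF e]] .
  then show "skew_ring (max_subgroup e) add mul"
    "subsemiring (max_subgroup e) {b \<in> S. idem_of b = e} add mul"
    using idem_of_max_subgroup max_subgroupD
    unfolding skew_ring_def semiring_def subsemiring_def by auto
  show "\<forall>b\<in>{b \<in> S. idem_of b = e}. \<exists>n>0. nsum add n b \<in> max_subgroup e"
    using nsum_in_max_subgroup_idem_of by blast
qed

lemma b_lattice_of_quasi_skew_rings: "b_lattice_of quasi_skew_ring S add mul"
  by (rule b_lattice_of_idem_of_classes)
    (auto simp: subsemiring_def idem_of_class_quasi_skew_ring)

lemma b_lattice_of_skew_rings_Reg: "b_lattice_of skew_ring (Reg_add S add) add mul"
proof (rule b_lattice_of_idem_of_classes)
  show "subsemiring (Reg_add S add) S add mul"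
    unfolding subsemiring_def using Reg_add_closed Reg_mul_right
    by (auto simp: Reg_add_def)
  show "skew_ring {b \<in> Reg_add S add. idem_of b = e} add mul" if "e \<in> S" "e \<oplus> e = e" for e
    using Reg_class_eq_max_subgroup max_subgroup_skew_ring add_idem_mul_idem that by simp
qed

lemma add_quasi_regular: "add_quasi_regular S add"
  using nsum_completely_regular
  unfolding add_quasi_regular_def completely_regular_def add_regular_def by blast

end

theorem theorem3p7:
  fixes S :: "'a set" and add mul :: "'a \<Rightarrow> 'a \<Rightarrow> 'a"
  assumes "semiring S add mul"
  shows "((quasi_completely_regular S add mul \<and>
           (\<forall>e\<in>add_idem S add. \<forall>f\<in>add_idem S add. add e f = add f e))
          \<longleftrightarrow>
          (b_lattice_of quasi_skew_ring S add mul \<and>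
           (\<forall>e\<in>add_idem S add. \<forall>f\<in>add_idem S add. add e f = add f e)))
       \<and> ((b_lattice_of quasi_skew_ring S add mul \<and>
           (\<forall>e\<in>add_idem S add. \<forall>f\<in>add_idem S add. add e f = add f e))
          \<longleftrightarrow>
          (add_quasi_regular S add \<and>
           (\<forall>a\<in>Reg_add S add. \<forall>b\<in>Reg_add S add. add a b \<in> Reg_add S add) \<and>
           b_lattice_of skew_ring (Reg_add S add) add mul))"
proof -
  interpret semiring_on S add mul
    using assms by unfold_locales
  have i_ii_iii: "b_lattice_of quasi_skew_ring S add mul \<and> add_quasi_regular S add \<and>
      (\<forall>a\<in>Reg_add S add. \<forall>b\<in>Reg_add S add. add a b \<in> Reg_add S add) \<and>
      b_lattice_of skew_ring (Reg_add S add) add mul"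
    if "quasi_completely_regular S add mul"
      "\<forall>e\<in>add_idem S add. \<forall>f\<in>add_idem S add. add e f = add f e"
  proof -
    interpret qcr_semiring_commuting_idem S add mul
      using that assms unfolding quasi_completely_regular_def by unfold_locales auto
    show ?thesis
      using b_lattice_of_quasi_skew_rings add_quasi_regular Reg_add_closed
        b_lattice_of_skew_rings_Reg by simp
  qed
  moreover have "quasi_completely_regular S add mul"
    if "b_lattice_of quasi_skew_ring S add mul"
    using that by (rule quasi_completely_regular_if_b_lattice_of_quasi_skew_rings)
  moreover have "quasi_completely_regular S add mul \<and>
      (\<forall>e\<in>add_idem S add. \<forall>f\<in>add_idem S add. add e f = add f e)"
    if "add_quasi_regular S add"
      "\<forall>a\<in>Reg_add S add. \<forall>b\<in>Reg_add S add. add a b \<in> Reg_add S add"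
      "b_lattice_of skew_ring (Reg_add S add) add mul"
    using quasi_completely_regular_if_Reg_b_lattice_of_skew_rings[OF that(1,3)]
      add_idem_commute_if_Reg_b_lattice_of_skew_rings[OF that(2,3)] by blast
  ultimately show ?thesis
    by blast
qed

end
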